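(* Let $N_0$ be a positive integer, $z\in\mathbb{C}$, $\nu\in[0,1/N_0]$, $0<b<1$, and assume that for all $t\in[b,1]$ we have $|1-tz|\le C$ for some constant $C<1$. Let $\theta = \arctan\left(\pi/|\log C|\right)$. If $m\ge1$ is an integer with $m\theta+2\pi/N_0\le\pi/2$, then the real part and the imaginary part of $\log^m(1-tz)\,(1-tz)^{-2\nu}$ each do not change sign for $t\in[b,1]$.
   Context: $\log$ and complex powers are taken with the principal branch, i.e. $(1-tz)^{-2\nu} = \exp(-2\nu\log(1-tz))$. *)

theory Defs
  imports "HOL-Analysis.Analysis"
begin

end

theory Submission
  imports Defs
begin

text \<open>
  For \<open>0 < |w| < 1\<close> the number \<open>-Ln w = -ln |w| - i Arg w\<close> lies in the right half-plane, so its
  argument is \<open>\<alpha> = arctan (Arg w / ln |w|)\<close>; for \<open>|w| \<le> C\<close> this gives \<open>|\<alpha>| \<le> \<theta>\<close>, and \<open>\<alpha>\<close> has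
  the sign opposite to \<open>Arg w\<close>. Hence \<open>(-Ln w)^m w^(-2\<nu>)\<close> has argument \<open>m \<alpha> - 2 \<nu> Arg w\<close>, which
  has absolute value at most \<open>m \<theta> + 2 \<pi> / N\<^sub>0 \<le> \<pi> / 2\<close> and again the sign opposite to \<open>Arg w\<close>.
  Along \<open>w = 1 - t z\<close>, \<open>t > 0\<close>, the sign of \<open>Im w = -t Im z\<close> and hence of \<open>Arg w\<close> is fixed, so the real
  part stays nonnegative and the imaginary part keeps one sign; the factor \<open>(-1)^m\<close> does not
  affect this.
\<close>

lemma powr_of_real_eq_rcis:
  fixes w :: complex and s :: real
  assumes "w \<noteq> 0"
  shows "w powr of_real s = rcis (cmod w powr s) (s * Arg w)"
proof -
  have "w powr of_real s = exp (of_real (s * ln (cmod w))) * exp (\<i> * of_real (s * Arg w))"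
    using assms by (simp add: powr_def Ln_Arg algebra_simps flip: exp_add)
  then show ?thesis
    using assms by (simp only: exp_of_real cis_conv_exp rcis_def powr_def) simp
qed

lemma uminus_Ln_power_mult_powr_eq_rcis:
  fixes w :: complex and s :: real and m :: nat
  assumes "w \<noteq> 0"
  shows "(- Ln w) ^ m * w powr of_real s
    = rcis (cmod (Ln w) ^ m * cmod w powr s) (real m * Arg (- Ln w) + s * Arg w)"
  by (metis DeMoivre2 norm_minus_cancel rcis_cmod_Arg rcis_mult powr_of_real_eq_rcis[OF assms])

lemma Arg_uminus_Ln_eq_arctan:
  assumes "w \<noteq> 0" and "cmod w < 1"
  shows "Arg (- Ln w) = arctan (Arg w / ln (cmod w))"
  using assms by (subst arg_conv_arctan) (simp_all add: Ln_Arg)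

lemma abs_arctan: "\<bar>arctan x\<bar> = arctan \<bar>x\<bar>"
  by (cases "0 \<le> x") (simp_all add: arctan_minus)

lemma abs_Arg_uminus_Ln_le:
  fixes w :: complex and C :: real
  assumes "w \<noteq> 0" and "cmod w \<le> C" and "C < 1"
  shows "\<bar>Arg (- Ln w)\<bar> \<le> arctan (pi / \<bar>ln C\<bar>)"
proof -
  have "0 < C" using assms by (metis norm_ge_zero zero_less_norm_iff order.strict_trans2)
  then have lnC: "0 < \<bar>ln C\<bar>" "\<bar>ln C\<bar> \<le> \<bar>ln (cmod w)\<bar>"
    using assms by auto
  have "\<bar>Arg (- Ln w)\<bar> = arctan (\<bar>Arg w\<bar> / \<bar>ln (cmod w)\<bar>)"
    using assms by (simp add: Arg_uminus_Ln_eq_arctan abs_arctan abs_divide)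
  also have "\<dots> \<le> arctan (pi / \<bar>ln C\<bar>)"
    unfolding arctan_le_iff using lnC Arg_bounded[of w]
    by (intro frac_le) auto
  finally show ?thesis .
qed

lemma uminus_Ln_power_mult_powr_sign:
  fixes w :: complex and s C :: real and m :: nat
  assumes "cmod w \<le> C" and "C < 1" and "s \<le> 0"
    and "real m * arctan (pi / \<bar>ln C\<bar>) - s * pi \<le> pi / 2"
  defines "Q \<equiv> (- Ln w) ^ m * w powr of_real s"
  shows "0 \<le> Re Q" and "0 \<le> Arg w \<Longrightarrow> Im Q \<le> 0" and "Arg w \<le> 0 \<Longrightarrow> 0 \<le> Im Q"
proof -
  obtain K \<delta> where Q: "Q = rcis K \<delta>" and "0 \<le> K" and \<delta>: "\<bar>\<delta>\<bar> \<le> pi / 2"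
    and \<delta>_nonpos: "0 \<le> Arg w \<Longrightarrow> \<delta> \<le> 0" and \<delta>_nonneg: "Arg w \<le> 0 \<Longrightarrow> 0 \<le> \<delta>"
  proof (cases "w = 0")
    case True
    then show thesis using that[of 0 0] by (simp add: Q_def)
  next
    case False
    define \<alpha> where "\<alpha> = Arg (- Ln w)"
    have "\<bar>real m * \<alpha> + s * Arg w\<bar> \<le> real m * \<bar>\<alpha>\<bar> + (- s) * \<bar>Arg w\<bar>"
      using abs_triangle_ineq[of "real m * \<alpha>" "s * Arg w"] \<open>s \<le> 0\<close> by (simp add: abs_mult)
    also have "\<dots> \<le> real m * arctan (pi / \<bar>ln C\<bar>) + (- s) * pi"
      using abs_Arg_uminus_Ln_le[OF False assms(1,2)] Arg_bounded[of w] \<open>s \<le> 0\<close>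
      unfolding \<alpha>_def by (intro add_mono mult_left_mono) auto
    finally have "\<bar>real m * \<alpha> + s * Arg w\<bar> \<le> pi / 2"
      using assms(4) by linarith
    moreover have "0 \<le> Arg w \<Longrightarrow> real m * \<alpha> + s * Arg w \<le> 0"
      "Arg w \<le> 0 \<Longrightarrow> 0 \<le> real m * \<alpha> + s * Arg w"
      using \<open>s \<le> 0\<close> assms(1,2) False unfolding \<alpha>_def
      by (auto intro!: add_nonpos_nonpos add_nonneg_nonneg
          simp: Arg_uminus_Ln_eq_arctan divide_nonneg_neg divide_nonpos_neg
            mult_nonneg_nonpos mult_nonpos_nonneg mult_nonpos_nonpos)
    ultimately show thesis
      using uminus_Ln_power_mult_powr_eq_rcis[OF False] that unfolding Q_def \<alpha>_def by auto
  qed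
  show "0 \<le> Re Q"
    using \<delta> \<open>0 \<le> K\<close> by (simp add: Q cos_ge_zero)
  show "Im Q \<le> 0" if "0 \<le> Arg w"
    using \<delta> \<delta>_nonpos[OF that] \<open>0 \<le> K\<close> sin_ge_zero[of "- \<delta>"] by (simp add: Q mult_nonneg_nonpos)
  show "0 \<le> Im Q" if "Arg w \<le> 0"
    using \<delta> \<delta>_nonneg[OF that] \<open>0 \<le> K\<close> sin_ge_zero[of \<delta>] by (simp add: Q)
qed

lemma Arg_one_minus_of_real_mult_sign:
  fixes z :: complex and S :: "real set"
  assumes "\<forall>t\<in>S. 0 \<le> t"
  shows "(\<forall>t\<in>S. 0 \<le> Arg (1 - of_real t * z)) \<or> (\<forall>t\<in>S. Arg (1 - of_real t * z) \<le> 0)"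
proof (cases "Im z \<le> 0")
  case True
  then show ?thesis
    using assms by (simp add: Arg_less_0 mult_nonneg_nonpos)
next
  case False
  have "Arg (1 - of_real t * z) \<le> 0" if "t \<in> S" for t
  proof (cases "t = 0")
    case False
    then have "0 < t" using assms that by force
    then have "Im (1 - of_real t * z) < 0"
      using \<open>\<not> Im z \<le> 0\<close> by simp
    then show ?thesis by (simp add: Arg_neg_iff less_imp_le)
  qed simp
  then show ?thesis by blast
qed

lemma constant_sign_neg_one_power_mult:
  fixes f :: "'a \<Rightarrow> real"
  assumes "(\<forall>x\<in>S. 0 \<le> f x) \<or> (\<forall>x\<in>S. f x \<le> 0)"
  shows "(\<forall>x\<in>S. 0 \<le> (-1) ^ m * f x) \<or> (\<forall>x\<in>S. (-1) ^ m * f x \<le> 0)"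
  using assms by (cases "even m") auto

theorem lemmaB4:
  fixes N0 m :: nat and z :: complex and \<nu> b C \<theta> :: real
  assumes "N0 > 0"
    and "0 \<le> \<nu>" and "\<nu> \<le> 1 / real N0"
    and "0 < b" and "b < 1"
    and "C < 1"
    and "\<forall>t\<in>{b..1}. cmod (1 - complex_of_real t * z) \<le> C"
    and "\<theta> = arctan (pi / \<bar>ln C\<bar>)"
    and "m \<ge> 1"
    and "real m * \<theta> + 2 * pi / real N0 \<le> pi / 2"
  shows "((\<forall>t\<in>{b..1}. Re ((Ln (1 - complex_of_real t * z)) ^ m * (1 - complex_of_real t * z) powr (- 2 * complex_of_real \<nu>)) \<ge> 0)
          \<or> (\<forall>t\<in>{b..1}. Re ((Ln (1 - complex_of_real t * z)) ^ m * (1 - complex_of_real t * z) powr (- 2 * complex_of_real \<nu>)) \<le> 0))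
       \<and> ((\<forall>t\<in>{b..1}. Im ((Ln (1 - complex_of_real t * z)) ^ m * (1 - complex_of_real t * z) powr (- 2 * complex_of_real \<nu>)) \<ge> 0)
          \<or> (\<forall>t\<in>{b..1}. Im ((Ln (1 - complex_of_real t * z)) ^ m * (1 - complex_of_real t * z) powr (- 2 * complex_of_real \<nu>)) \<le> 0))"
proof -
  define w where "w t = 1 - complex_of_real t * z" for t
  define Q where "Q t = (- Ln (w t)) ^ m * w t powr of_real (- 2 * \<nu>)" for t
  have "Ln (w t) ^ m * w t powr (- 2 * complex_of_real \<nu>) = of_real ((-1) ^ m) * Q t" for t
    unfolding Q_def by (simp add: power_minus[of "Ln (w t)"] mult.assoc)
  then have Re_Im_eq:
    "Re (Ln (w t) ^ m * w t powr (- 2 * complex_of_real \<nu>)) = (-1) ^ m * Re (Q t)"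
    "Im (Ln (w t) ^ m * w t powr (- 2 * complex_of_real \<nu>)) = (-1) ^ m * Im (Q t)" for t
    by simp_all
  have "\<nu> * pi \<le> pi / real N0"
    using mult_right_mono[OF assms(3) pi_ge_zero] by simp
  then have "real m * arctan (pi / \<bar>ln C\<bar>) - (- 2 * \<nu>) * pi \<le> pi / 2"
    using assms(10) unfolding assms(8) by linarith
  moreover have "- 2 * \<nu> \<le> 0" using assms(2) by simp
  ultimately have Q_sign: "0 \<le> Re (Q t)" "0 \<le> Arg (w t) \<Longrightarrow> Im (Q t) \<le> 0"
      "Arg (w t) \<le> 0 \<Longrightarrow> 0 \<le> Im (Q t)" if "t \<in> {b..1}" for t
    using uminus_Ln_power_mult_powr_sign[OF assms(7)[rule_format, OF that] assms(6)]
    unfolding Q_def w_def by blast+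
  have "(\<forall>t\<in>{b..1}. Im (Q t) \<le> 0) \<or> (\<forall>t\<in>{b..1}. 0 \<le> Im (Q t))"
    using Arg_one_minus_of_real_mult_sign[of "{b..1}" z] assms(4) Q_sign(2,3)
    unfolding w_def by force
  then show ?thesis
    using Q_sign(1) constant_sign_neg_one_power_mult[of "{b..1}" "\<lambda>t. Re (Q t)" m]
      constant_sign_neg_one_power_mult[of "{b..1}" "\<lambda>t. Im (Q t)" m]
    unfolding Re_Im_eq[unfolded w_def] by auto
qed

end
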